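(* Let $\lambda_*>a_1,\dots,a_n$ be real, and let $(X_0,P_0)\in T^*V_{n,r}$ be real with $P_0$ belonging to the set $$\Big\{A^{1/2}(\lambda_* )\tilde X-\tfrac12X\big(\tilde X^TA^{1/2}(\lambda_* )X+X^TA^{1/2}(\lambda_* )\tilde X\big)\ :\ X^TX=\tilde X^T\tilde X=\mathbf I_r\Big\},$$ where $X=X_0$. Let $L(\lambda_* )$ be evaluated at $(X_0,P_0)$ and choose the branch of the discrete Neumann correspondence $\mathfrak B_r$ corresponding to a partition $\{w_1,\dots,w_r\mid-w_1,\dots,-w_r\}$ of its eigenvalues such that $w_1,\dots,w_r$ are pairwise distinct, $w_i+w_j\ne0$ and $w_i+\bar w_j\ne0$ for all $i,j=1,\dots,r$. Then the trajectory obtained from $(X_0,P_0)$ by iterating this branch is real.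
   Context: $A=\mathrm{diag}(a_1,\dots,a_n)$ real with distinct $a_i$, $A(\lambda)=\lambda\mathbf I_n-A$, $A^{1/2}(\lambda_* )=\mathrm{diag}(\sqrt{\lambda_*-a_i})$ with positive square roots. $T^*V_{n,r}=\{(X,P): X^TX=\mathbf I_r,\ X^TP+P^TX=0\}$. $L(\lambda)=\begin{pmatrix} X^TA(\lambda)^{-1}P & X^TA(\lambda)^{-1}X\\ \mathbf I_r-P^TA(\lambda)^{-1}P & -P^TA(\lambda)^{-1}X\end{pmatrix}$. For a partition $\{w_1,\dots,w_r\mid-w_1,\dots,-w_r\}$ of the eigenvalues of $L(\lambda_* )$ with the $w_i$ distinct and $w_i\ne-w_j$, let $\begin{pmatrix}\Xi\\ \Upsilon\end{pmatrix}$ be the matrix of eigenvectors with eigenvalues $w_1,\dots,w_r$ and $\Gamma=\Upsilon\Xi^{-1}$; the corresponding branch of $\mathfrak B_r$ is $\tilde X=A^{-1/2}(\lambda_* )(P+X\Gamma)$, $\tilde P=-A^{1/2}(\lambda_* )X+\tilde X\Gamma$, and iteration applies the same rule to the current point (the spectrum of $L(\lambda_* )$ being preserved). *)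

theory Defs
  imports "Jordan_Normal_Form.Char_Poly"
begin

definition diagm :: "nat \<Rightarrow> (nat \<Rightarrow> complex) \<Rightarrow> complex mat" where
  "diagm n d = mat n n (\<lambda>(i,j). if i = j then d i else 0)"

definition Ainv :: "nat \<Rightarrow> (nat \<Rightarrow> real) \<Rightarrow> real \<Rightarrow> complex mat" where
  "Ainv n a lam = diagm n (\<lambda>i. complex_of_real (1 / (lam - a i)))"

definition Ahalf :: "nat \<Rightarrow> (nat \<Rightarrow> real) \<Rightarrow> real \<Rightarrow> complex mat" where
  "Ahalf n a lam = diagm n (\<lambda>i. complex_of_real (sqrt (lam - a i)))"

definition Ahalf_inv :: "nat \<Rightarrow> (nat \<Rightarrow> real) \<Rightarrow> real \<Rightarrow> complex mat" where
  "Ahalf_inv n a lam = diagm n (\<lambda>i. complex_of_real (1 / sqrt (lam - a i)))"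

definition Lmat :: "nat \<Rightarrow> (nat \<Rightarrow> real) \<Rightarrow> real \<Rightarrow> nat \<Rightarrow> complex mat \<Rightarrow> complex mat \<Rightarrow> complex mat" where
  "Lmat n a lam r X P =
     four_block_mat
       (transpose_mat X * Ainv n a lam * P) (transpose_mat X * Ainv n a lam * X)
       (1\<^sub>m r - transpose_mat P * Ainv n a lam * P) (- (transpose_mat P * Ainv n a lam * X))"

(* One step of the branch of B_r determined by the eigenvalues w_0..w_{r-1}:
   (Xi; Upsilon) is a matrix whose columns are eigenvectors of L(lam) at the current
   point with eigenvalues w_0..w_{r-1}, Gamma = Upsilon Xi^{-1} (Xi invertible), and
   X' = A^{-1/2}(P + X Gamma),  P' = -A^{1/2} X + X' Gamma. *)
definition neumann_step ::
  "nat \<Rightarrow> (nat \<Rightarrow> real) \<Rightarrow> real \<Rightarrow> nat \<Rightarrow> (nat \<Rightarrow> complex) \<Rightarrow>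
   complex mat \<times> complex mat \<Rightarrow> complex mat \<times> complex mat \<Rightarrow> bool" where
  "neumann_step n a lam r w XP XP' \<longleftrightarrow>
     (\<exists>Xi Ups Gam.
        Xi \<in> carrier_mat r r \<and> Ups \<in> carrier_mat r r \<and> Gam \<in> carrier_mat r r \<and>
        Lmat n a lam r (fst XP) (snd XP) * (Xi @\<^sub>r Ups) = (Xi @\<^sub>r Ups) * diagm r w \<and>
        invertible_mat Xi \<and> Gam * Xi = Ups \<and>
        fst XP' = Ahalf_inv n a lam * (snd XP + fst XP * Gam) \<and>
        snd XP' = - (Ahalf n a lam * fst XP) + fst XP' * Gam)"

definition real_mat :: "complex mat \<Rightarrow> bool" where
  "real_mat M \<longleftrightarrow> (\<exists>R :: real mat. M = map_mat complex_of_real R)"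

end

theory Submission
  imports Defs
begin

text \<open>
  With \<open>J = [[0, I], [-I, 0]]\<close> the Lax matrix is Hamiltonian, \<open>L\<^sup>T J = - J L\<close>, so
  eigenvector blocks \<open>W, V\<close> of \<open>L\<close> for eigenvalues \<open>u\<^sub>i, v\<^sub>j\<close> satisfy
  \<open>diag u \<cdot> W\<^sup>T J V = - W\<^sup>T J V \<cdot> diag v\<close>, hence \<open>W\<^sup>T J V = 0\<close> as soon as no \<open>u\<^sub>i + v\<^sub>j\<close> vanishes.
  For \<open>W = V = (\<Xi>; \<Upsilon>)\<close> this says that \<open>\<Gamma> = \<Upsilon> \<Xi>\<^sup>-\<^sup>1\<close> is symmetric. At a real point \<open>L\<close> is real,
  so the conjugate blocks are eigenvectors for the conjugate eigenvalues, and the same argument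
  gives \<open>conj \<Gamma> = \<Gamma>\<^sup>T\<close>. Thus \<open>\<Gamma>\<close> is real and the step maps real points to real points.
  Only the two non-resonance conditions on \<open>w\<close> enter the argument.
\<close>

interpretation cnj: comm_ring_hom cnj
  by unfold_locales auto

lemma (in ab_group_add_hom) mat_hom_add:
  "dim_row A = dim_row B \<Longrightarrow> dim_col A = dim_col B \<Longrightarrow>
    map_mat hom (A + B) = map_mat hom A + map_mat hom B"
  by (rule eq_matI) (auto simp: hom_add)

lemma (in ab_group_add_hom) mat_hom_minus:
  "dim_row A = dim_row B \<Longrightarrow> dim_col A = dim_col B \<Longrightarrow>
    map_mat hom (A - B) = map_mat hom A - map_mat hom B"
  by (rule eq_matI) (auto simp: hom_minus)

lemma (in ab_group_add_hom) mat_hom_uminus: "map_mat hom (- A) = - map_mat hom A"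
  by (rule eq_matI) (auto simp: hom_uminus)

lemma (in semiring_hom) mat_hom_mult_dim:
  assumes "dim_col A = dim_row B"
  shows "mat\<^sub>h (A * B) = mat\<^sub>h A * mat\<^sub>h B"
  by (rule mat_hom_mult[OF carrier_mat_triv carrier_matI[OF assms[symmetric] refl]])

lemma (in zero_hom) mat_hom_mat_diag: "map_mat hom (mat_diag k d) = mat_diag k (\<lambda>i. hom (d i))"
  by (rule eq_matI) (auto simp: mat_diag_def)

lemma map_mat_append_rows:
  "map_mat f (A @\<^sub>r B) = map_mat f A @\<^sub>r map_mat f B" if "dim_col A = dim_col B"
  using that by (auto simp: append_rows_def mat_eq_iff)

lemma real_mat_iff_cnj_fixed: "real_mat M \<longleftrightarrow> map_mat cnj M = M"
proof
  assume "map_mat cnj M = M"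
  then have "M = map_mat complex_of_real (map_mat Re M)"
    by (auto simp: mat_eq_iff complex_eq_iff)
  then show "real_mat M" unfolding real_mat_def by blast
qed (auto simp: real_mat_def)

lemma invertible_matE:
  assumes "invertible_mat A" and A: "A \<in> carrier_mat n n"
  obtains B where "B \<in> carrier_mat n n" "A * B = 1\<^sub>m n" "B * A = 1\<^sub>m n"
proof -
  obtain B where AB: "A * B = 1\<^sub>m n" and BA: "B * A = 1\<^sub>m (dim_row B)"
    using assms unfolding invertible_mat_def inverts_mat_def by auto
  have "B \<in> carrier_mat n n"
    using arg_cong[OF AB, of dim_col] arg_cong[OF BA, of dim_col] A by auto
  with AB BA show thesis using that by auto
qed

lemma (in semiring_hom) invertible_mat_hom:
  assumes "invertible_mat A" and A: "A \<in> carrier_mat n n"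
  shows "invertible_mat (mat\<^sub>h A)"
proof -
  obtain B where B: "B \<in> carrier_mat n n" and AB: "A * B = 1\<^sub>m n" and BA: "B * A = 1\<^sub>m n"
    using invertible_matE[OF assms] .
  have "mat\<^sub>h A * mat\<^sub>h B = 1\<^sub>m n" "mat\<^sub>h B * mat\<^sub>h A = 1\<^sub>m n"
    using mat_hom_mult[OF A B] mat_hom_mult[OF B A] AB BA by (simp_all add: mat_hom_one)
  then show ?thesis
    using A B unfolding invertible_mat_def inverts_mat_def square_mat.simps by auto
qed

lemma mult_left_cancel_mat:
  fixes A B K1 K2 :: "'a :: semiring_1 mat"
  assumes A: "A \<in> carrier_mat n n" and B: "B \<in> carrier_mat n n" and BA: "B * A = 1\<^sub>m n"
    and K1: "K1 \<in> carrier_mat n m" and K2: "K2 \<in> carrier_mat n m"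
    and eq: "A * K1 = A * K2"
  shows "K1 = K2"
proof -
  have "K1 = B * (A * K1)" using assoc_mult_mat[OF B A K1] BA left_mult_one_mat[OF K1] by simp
  also have "\<dots> = K2" unfolding eq using assoc_mult_mat[OF B A K2] BA left_mult_one_mat[OF K2] by simp
  finally show ?thesis .
qed

lemma mult_right_cancel_mat:
  fixes A B K1 K2 :: "'a :: semiring_1 mat"
  assumes A: "A \<in> carrier_mat n n" and B: "B \<in> carrier_mat n n" and AB: "A * B = 1\<^sub>m n"
    and K1: "K1 \<in> carrier_mat m n" and K2: "K2 \<in> carrier_mat m n"
    and eq: "K1 * A = K2 * A"
  shows "K1 = K2"
proof -
  have "K1 = K1 * A * B" using assoc_mult_mat[OF K1 A B] AB right_mult_one_mat[OF K1] by simp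
  also have "\<dots> = K2" unfolding eq using assoc_mult_mat[OF K2 A B] AB right_mult_one_mat[OF K2] by simp
  finally show ?thesis .
qed

lemma transpose_mat_diag: "transpose_mat (mat_diag k d) = mat_diag k d"
  by (rule eq_matI) (auto simp: mat_diag_def)

lemma diagm_eq_mat_diag: "diagm k d = mat_diag k d"
  by (rule eq_matI) (auto simp: diagm_def mat_diag_def)

lemma transpose_sandwich:
  fixes A B C :: "'a :: comm_semiring_1 mat"
  assumes A: "A \<in> carrier_mat n k" and B: "B \<in> carrier_mat n n" and C: "C \<in> carrier_mat n l"
    and B_sym: "transpose_mat B = B"
  shows "transpose_mat (transpose_mat A * B * C) = transpose_mat C * B * A"
proof -
  have AtB: "transpose_mat A * B \<in> carrier_mat k n" using A B by simp
  have "transpose_mat (transpose_mat A * B * C) = transpose_mat C * (B * A)"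
    using transpose_mult[OF AtB C] transpose_mult[of "transpose_mat A" k n B n] A B B_sym by simp
  then show ?thesis using A B C by simp
qed

lemma eigenvectors_isotropic:
  fixes L J W V :: "'a :: idom mat"
  assumes L: "L \<in> carrier_mat m m" and J: "J \<in> carrier_mat m m"
    and hamiltonian: "transpose_mat L * J = - (J * L)"
    and W: "W \<in> carrier_mat m k" and V: "V \<in> carrier_mat m l"
    and LW: "L * W = W * mat_diag k u" and LV: "L * V = V * mat_diag l v"
    and nonres: "\<And>i j. i < k \<Longrightarrow> j < l \<Longrightarrow> u i + v j \<noteq> 0"
  shows "transpose_mat W * J * V = 0\<^sub>m k l"
proof -
  define K where "K = transpose_mat W * J * V"
  have Wt: "transpose_mat W \<in> carrier_mat k m" and Lt: "transpose_mat L \<in> carrier_mat m m"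
    using W L by auto
  have WtJ: "transpose_mat W * J \<in> carrier_mat k m" using Wt J by auto
  have K: "K \<in> carrier_mat k l" using WtJ V by (simp add: K_def)
  have "mat_diag k u * K = transpose_mat (W * mat_diag k u) * J * V"
    unfolding K_def transpose_mult[OF W mat_diag_dim] transpose_mat_diag
    by (simp only: assoc_mult_mat[OF mat_diag_dim Wt J] assoc_mult_mat[OF mat_diag_dim WtJ V])
  also have "\<dots> = transpose_mat W * (transpose_mat L * J) * V"
    unfolding LW[symmetric] transpose_mult[OF L W] using Wt Lt J by simp
  also have "\<dots> = - (transpose_mat W * J * (L * V))"
    unfolding hamiltonian using W J L V
    by (simp del: assoc_mult_mat add: assoc_mult_mat[OF Wt J L, symmetric] assoc_mult_mat[OF WtJ L V])
  also have "\<dots> = - (K * mat_diag l v)"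
    unfolding LV K_def by (simp only: assoc_mult_mat[OF WtJ V mat_diag_dim])
  finally have sylvester: "mat_diag k u * K = - (K * mat_diag l v)" .
  show ?thesis
    unfolding K_def[symmetric]
  proof (rule eq_matI)
    fix i j assume "i < dim_row (0\<^sub>m k l :: 'a mat)" "j < dim_col (0\<^sub>m k l :: 'a mat)"
    then have ij: "i < k" "j < l" by auto
    have "u i * K $$ (i, j) = - (K $$ (i, j) * v j)"
      using arg_cong[OF sylvester, of "\<lambda>A. A $$ (i, j)"] K ij
      by (simp add: mat_diag_mult_left[OF K] mat_diag_mult_right[OF K])
    then have "(u i + v j) * K $$ (i, j) = 0" by (simp add: algebra_simps)
    then show "K $$ (i, j) = 0\<^sub>m k l $$ (i, j)" using nonres[OF ij] ij by simp
  qed (use K in auto)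
qed

definition symplectic_mat :: "nat \<Rightarrow> 'a :: ring_1 mat" where
  "symplectic_mat r = four_block_mat (0\<^sub>m r r) (1\<^sub>m r) (- 1\<^sub>m r) (0\<^sub>m r r)"

lemma symplectic_mat_carrier [simp]: "symplectic_mat r \<in> carrier_mat (r + r) (r + r)"
  by (simp add: symplectic_mat_def)

lemma hamiltonian_four_block_mat:
  fixes M S T :: "'a :: comm_ring_1 mat"
  assumes M: "M \<in> carrier_mat r r" and S: "S \<in> carrier_mat r r" and T: "T \<in> carrier_mat r r"
    and S_sym: "transpose_mat S = S" and T_sym: "transpose_mat T = T"
  defines "H \<equiv> four_block_mat M S T (- transpose_mat M)"
  shows "transpose_mat H * symplectic_mat r = - (symplectic_mat r * H)"
proof -
  have Mt: "- transpose_mat M \<in> carrier_mat r r" using M by simp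
  have "transpose_mat H * symplectic_mat r = four_block_mat (- T) (transpose_mat M) M S"
    unfolding H_def symplectic_mat_def transpose_four_block_mat[OF M S T Mt] S_sym T_sym
    by (subst mult_four_block_mat[of _ r r _ r _ r _ _ r _ r]) (use M S T in auto)
  also have "\<dots> = - (symplectic_mat r * H)"
    unfolding H_def symplectic_mat_def
    by (subst mult_four_block_mat[of _ r r _ r _ r _ _ r _ r]) (use M S T in \<open>auto\<close>)
  finally show ?thesis .
qed

lemma symplectic_form_append_rows:
  fixes Xi Ups Y Z :: "'a :: comm_ring_1 mat"
  assumes Xi: "Xi \<in> carrier_mat r k" and Ups: "Ups \<in> carrier_mat r k"
    and Y: "Y \<in> carrier_mat r l" and Z: "Z \<in> carrier_mat r l"
  shows "transpose_mat (Xi @\<^sub>r Ups) * symplectic_mat r * (Y @\<^sub>r Z)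
    = transpose_mat Xi * Z - transpose_mat Ups * Y"
proof -
  have "transpose_mat (Xi @\<^sub>r Ups) * symplectic_mat r
      = four_block_mat (- transpose_mat Ups) (transpose_mat Xi) (0\<^sub>m 0 r) (0\<^sub>m 0 r)"
    unfolding append_rows_def symplectic_mat_def using Xi Ups
    by (subst transpose_four_block_mat[of _ r k _ 0 _ r], auto,
        subst mult_four_block_mat[of _ k r _ r _ 0 _ _ r _ r], auto)
  also have "\<dots> * (Y @\<^sub>r Z) = transpose_mat Xi * Z - transpose_mat Ups * Y"
    unfolding append_rows_def using Xi Ups Y Z
    by (subst mult_four_block_mat[of _ k r _ r _ 0 _ _ l _ 0], auto)
  finally show ?thesis .
qed

lemma hamiltonian_eigenvector_blocks_isotropic:
  fixes L Xi Ups Y Z :: "'a :: idom mat"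
  assumes L: "L \<in> carrier_mat (r + r) (r + r)"
    and hamiltonian: "transpose_mat L * symplectic_mat r = - (symplectic_mat r * L)"
    and Xi: "Xi \<in> carrier_mat r k" and Ups: "Ups \<in> carrier_mat r k"
    and Y: "Y \<in> carrier_mat r l" and Z: "Z \<in> carrier_mat r l"
    and LW: "L * (Xi @\<^sub>r Ups) = (Xi @\<^sub>r Ups) * mat_diag k u"
    and LV: "L * (Y @\<^sub>r Z) = (Y @\<^sub>r Z) * mat_diag l v"
    and nonres: "\<And>i j. i < k \<Longrightarrow> j < l \<Longrightarrow> u i + v j \<noteq> 0"
  shows "transpose_mat Xi * Z = transpose_mat Ups * Y"
proof -
  have "transpose_mat Xi * Z - transpose_mat Ups * Y = 0\<^sub>m k l"
    using eigenvectors_isotropic[OF L symplectic_mat_carrier hamiltonian _ _ LW LV nonres]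
      Xi Ups Y Z by (simp add: symplectic_form_append_rows)
  then show ?thesis
    using Xi Ups Y Z by (auto simp: mat_eq_iff)
qed

lemma transpose_eq_of_isotropic_graphs:
  fixes G G' Xi Xi' :: "'a :: comm_ring_1 mat"
  assumes G: "G \<in> carrier_mat r r" and G': "G' \<in> carrier_mat r r"
    and Xi: "Xi \<in> carrier_mat r r" and Xi': "Xi' \<in> carrier_mat r r"
    and "invertible_mat Xi" and "invertible_mat Xi'"
    and isotropic: "transpose_mat Xi * (G' * Xi') = transpose_mat (G * Xi) * Xi'"
  shows "G' = transpose_mat G"
proof -
  obtain B where B: "B \<in> carrier_mat r r" and XiB: "Xi * B = 1\<^sub>m r"
    using invertible_matE[OF \<open>invertible_mat Xi\<close> Xi] by metis
  obtain B' where B': "B' \<in> carrier_mat r r" and XiB': "Xi' * B' = 1\<^sub>m r"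
    using invertible_matE[OF \<open>invertible_mat Xi'\<close> Xi'] by metis
  have Bt_Xit: "transpose_mat B * transpose_mat Xi = 1\<^sub>m r"
    using arg_cong[OF XiB, of transpose_mat] transpose_mult[OF Xi B] by simp
  have "transpose_mat Xi * (G' * Xi') = transpose_mat Xi * (transpose_mat G * Xi')"
    using isotropic transpose_mult[OF G Xi] Xi G Xi' by simp
  then have "G' * Xi' = transpose_mat G * Xi'"
    using mult_left_cancel_mat[OF _ _ Bt_Xit] B Xi G G' Xi'
    by (meson mult_carrier_mat transpose_carrier_mat)
  then show ?thesis
    using mult_right_cancel_mat[OF Xi' B' XiB' G'] G by simp
qed

lemma real_hamiltonian_eigen_graph_real:
  fixes L Xi Ups Gam :: "complex mat"
  assumes L: "L \<in> carrier_mat (r + r) (r + r)"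
    and hamiltonian: "transpose_mat L * symplectic_mat r = - (symplectic_mat r * L)"
    and L_real: "map_mat cnj L = L"
    and Xi: "Xi \<in> carrier_mat r r" and Ups: "Ups \<in> carrier_mat r r" and Gam: "Gam \<in> carrier_mat r r"
    and eigen: "L * (Xi @\<^sub>r Ups) = (Xi @\<^sub>r Ups) * mat_diag r w"
    and "invertible_mat Xi" and graph: "Gam * Xi = Ups"
    and nonres: "\<And>i j. i < r \<Longrightarrow> j < r \<Longrightarrow> w i + w j \<noteq> 0"
    and nonres_cnj: "\<And>i j. i < r \<Longrightarrow> j < r \<Longrightarrow> w i + cnj (w j) \<noteq> 0"
  shows "map_mat cnj Gam = Gam"
proof -
  have W: "Xi @\<^sub>r Ups \<in> carrier_mat (r + r) r" using Xi Ups by auto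
  have "map_mat cnj (Xi @\<^sub>r Ups) = map_mat cnj Xi @\<^sub>r map_mat cnj Ups"
    using Xi Ups by (simp add: map_mat_append_rows)
  then have eigen_cnj: "L * (map_mat cnj Xi @\<^sub>r map_mat cnj Ups)
      = (map_mat cnj Xi @\<^sub>r map_mat cnj Ups) * mat_diag r (\<lambda>i. cnj (w i))"
    using arg_cong[OF eigen, of "map_mat cnj"] cnj.mat_hom_mult[OF L W] cnj.mat_hom_mult[OF W mat_diag_dim]
    by (simp add: cnj.mat_hom_mat_diag L_real)
  have "transpose_mat Xi * Ups = transpose_mat Ups * Xi"
    by (rule hamiltonian_eigenvector_blocks_isotropic[OF L hamiltonian Xi Ups Xi Ups eigen eigen nonres])
  then have Gam_sym: "Gam = transpose_mat Gam"
    using transpose_eq_of_isotropic_graphs[OF Gam Gam Xi Xi \<open>invertible_mat Xi\<close> \<open>invertible_mat Xi\<close>]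
    by (simp add: graph)
  have "transpose_mat Xi * map_mat cnj Ups = transpose_mat Ups * map_mat cnj Xi"
    by (rule hamiltonian_eigenvector_blocks_isotropic[OF L hamiltonian Xi Ups _ _ eigen eigen_cnj nonres_cnj])
      (use Xi Ups in auto)
  moreover have "map_mat cnj Ups = map_mat cnj Gam * map_mat cnj Xi"
    using graph Gam Xi by (auto simp: cnj.mat_hom_mult_dim)
  ultimately have "map_mat cnj Gam = transpose_mat Gam"
    using transpose_eq_of_isotropic_graphs[OF Gam _ Xi _ \<open>invertible_mat Xi\<close>
        cnj.invertible_mat_hom[OF \<open>invertible_mat Xi\<close> Xi]] Gam Xi
    by (simp add: graph)
  with Gam_sym show ?thesis by simp
qed

lemma Ainv_carrier [simp]: "Ainv n a lam \<in> carrier_mat n n"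
  and Ahalf_carrier [simp]: "Ahalf n a lam \<in> carrier_mat n n"
  and Ahalf_inv_carrier [simp]: "Ahalf_inv n a lam \<in> carrier_mat n n"
  by (simp_all add: Ainv_def Ahalf_def Ahalf_inv_def diagm_def)

lemma transpose_Ainv: "transpose_mat (Ainv n a lam) = Ainv n a lam"
  by (rule eq_matI) (auto simp: Ainv_def diagm_def)

lemma cnj_diagm_real:
  "map_mat cnj (diagm k (\<lambda>i. complex_of_real (f i))) = diagm k (\<lambda>i. complex_of_real (f i))"
  by (rule eq_matI) (auto simp: diagm_def)

lemma Ahalf_cnj_fixed: "map_mat cnj (Ahalf n a lam) = Ahalf n a lam"
  and Ahalf_inv_cnj_fixed: "map_mat cnj (Ahalf_inv n a lam) = Ahalf_inv n a lam"
  unfolding Ahalf_def Ahalf_inv_def by (rule cnj_diagm_real)+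

lemma Lmat_hamiltonian:
  assumes X: "X \<in> carrier_mat n r" and P: "P \<in> carrier_mat n r"
  shows "transpose_mat (Lmat n a lam r X P) * symplectic_mat r = - (symplectic_mat r * Lmat n a lam r X P)"
proof -
  let ?B = "Ainv n a lam"
  have sandwich: "transpose_mat (transpose_mat Y * ?B * Y') = transpose_mat Y' * ?B * Y"
    if "Y \<in> carrier_mat n r" "Y' \<in> carrier_mat n r" for Y Y'
    by (rule transpose_sandwich[OF that(1) Ainv_carrier that(2) transpose_Ainv])
  have "Lmat n a lam r X P = four_block_mat (transpose_mat X * ?B * P) (transpose_mat X * ?B * X)
      (1\<^sub>m r - transpose_mat P * ?B * P) (- transpose_mat (transpose_mat X * ?B * P))"
    unfolding Lmat_def sandwich[OF X P] ..
  also have "transpose_mat \<dots> * symplectic_mat r = - (symplectic_mat r * \<dots>)"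
  proof (rule hamiltonian_four_block_mat)
    have PBP: "transpose_mat P * ?B * P \<in> carrier_mat r r"
      using P by (intro mult_carrier_mat[of _ r n]) auto
    then show "transpose_mat (1\<^sub>m r - transpose_mat P * ?B * P) = 1\<^sub>m r - transpose_mat P * ?B * P"
      by (simp add: transpose_minus[OF one_carrier_mat PBP] sandwich[OF P P])
  qed (use X P sandwich in auto)
  finally show ?thesis .
qed

lemma Lmat_cnj_fixed:
  assumes X: "X \<in> carrier_mat n r" and P: "P \<in> carrier_mat n r"
    and X_real: "map_mat cnj X = X" and P_real: "map_mat cnj P = P"
  shows "map_mat cnj (Lmat n a lam r X P) = Lmat n a lam r X P"
proof -
  have B_real: "map_mat cnj (Ainv n a lam) = Ainv n a lam"
    unfolding Ainv_def by (rule cnj_diagm_real)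
  have Xt_real: "map_mat cnj (transpose_mat X) = transpose_mat X"
    and Pt_real: "map_mat cnj (transpose_mat P) = transpose_mat P"
    using X_real P_real by (metis map_mat_transpose)+
  show ?thesis
    unfolding Lmat_def using X P
    by (subst map_four_block_mat[of _ r r _ r _ r])
      (auto simp: cnj.mat_hom_mult_dim cnj.mat_hom_minus cnj.mat_hom_uminus cnj.mat_hom_one
        Xt_real Pt_real X_real P_real B_real carrier_matD[OF Ainv_carrier])
qed

lemma neumann_step_preserves_real:
  fixes X P X' P' :: "complex mat"
  assumes X: "X \<in> carrier_mat n r" and P: "P \<in> carrier_mat n r"
    and X_real: "map_mat cnj X = X" and P_real: "map_mat cnj P = P"
    and step: "neumann_step n a lam r w (X, P) (X', P')"
    and nonres: "\<forall>i<r. \<forall>j<r. w i + w j \<noteq> 0"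
    and nonres_cnj: "\<forall>i<r. \<forall>j<r. w i + cnj (w j) \<noteq> 0"
  shows "X' \<in> carrier_mat n r \<and> P' \<in> carrier_mat n r \<and> map_mat cnj X' = X' \<and> map_mat cnj P' = P'"
proof -
  obtain Xi Ups Gam where Xi: "Xi \<in> carrier_mat r r" and Ups: "Ups \<in> carrier_mat r r"
    and Gam: "Gam \<in> carrier_mat r r"
    and eigen: "Lmat n a lam r X P * (Xi @\<^sub>r Ups) = (Xi @\<^sub>r Ups) * diagm r w"
    and "invertible_mat Xi" and graph: "Gam * Xi = Ups"
    and X': "X' = Ahalf_inv n a lam * (P + X * Gam)"
    and P': "P' = - (Ahalf n a lam * X) + X' * Gam"
    using step unfolding neumann_step_def by auto
  have L: "Lmat n a lam r X P \<in> carrier_mat (r + r) (r + r)"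
    unfolding Lmat_def using X P by (intro four_block_carrier_mat) auto
  have Gam_real: "map_mat cnj Gam = Gam"
    by (rule real_hamiltonian_eigen_graph_real[OF L Lmat_hamiltonian[OF X P]
          Lmat_cnj_fixed[OF X P X_real P_real] Xi Ups Gam _ \<open>invertible_mat Xi\<close> graph])
      (use eigen nonres nonres_cnj in \<open>auto simp: diagm_eq_mat_diag\<close>)
  have XGam: "P + X * Gam \<in> carrier_mat n r" using X P Gam by auto
  have X'_carrier: "X' \<in> carrier_mat n r"
    unfolding X' by (rule mult_carrier_mat[OF Ahalf_inv_carrier XGam])
  have P'_carrier: "P' \<in> carrier_mat n r"
    unfolding P' using X Gam X'_carrier
    by (meson Ahalf_carrier uminus_carrier_mat add_carrier_mat mult_carrier_mat)
  have X'_real: "map_mat cnj X' = X'"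
    unfolding X' using cnj.mat_hom_mult[OF Ahalf_inv_carrier XGam] cnj.mat_hom_mult[OF X Gam] X P Gam
    by (simp add: cnj.mat_hom_add Ahalf_inv_cnj_fixed X_real P_real Gam_real)
  have P'_real: "map_mat cnj P' = P'"
    unfolding P' using cnj.mat_hom_mult[OF Ahalf_carrier X] cnj.mat_hom_mult[OF X'_carrier Gam] X X'_carrier Gam
    by (simp add: cnj.mat_hom_add cnj.mat_hom_uminus Ahalf_cnj_fixed X_real X'_real Gam_real
        carrier_matD[OF Ahalf_carrier])
  show ?thesis using X'_carrier P'_carrier X'_real P'_real by blast
qed

theorem proposition6p5:
  fixes n r :: nat and a :: "nat \<Rightarrow> real" and lam :: real
    and X0 P0 :: "real mat" and w :: "nat \<Rightarrow> complex"
    and traj :: "nat \<Rightarrow> complex mat \<times> complex mat"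
  assumes a_distinct: "\<forall>i<n. \<forall>j<n. i \<noteq> j \<longrightarrow> a i \<noteq> a j"
    and lam_gt: "\<forall>i<n. lam > a i"
    and X0_dim: "X0 \<in> carrier_mat n r" and P0_dim: "P0 \<in> carrier_mat n r"
    and stiefel: "transpose_mat X0 * X0 = 1\<^sub>m r"
    and cotangent: "transpose_mat X0 * P0 + transpose_mat P0 * X0 = 0\<^sub>m r r"
    and P0_set: "\<exists>Xt :: real mat. Xt \<in> carrier_mat n r \<and> transpose_mat Xt * Xt = 1\<^sub>m r \<and>
        map_mat complex_of_real P0 =
          Ahalf n a lam * map_mat complex_of_real Xt
          - (1/2 :: complex) \<cdot>\<^sub>m (map_mat complex_of_real X0 *
             (transpose_mat (map_mat complex_of_real Xt) * Ahalf n a lam * map_mat complex_of_real X0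
              + transpose_mat (map_mat complex_of_real X0) * Ahalf n a lam * map_mat complex_of_real Xt))"
    and partition: "char_poly (Lmat n a lam r (map_mat complex_of_real X0) (map_mat complex_of_real P0))
        = (\<Prod>i<r. [: - w i, 1 :] * [: w i, 1 :])"
    and w_distinct: "\<forall>i<r. \<forall>j<r. i \<noteq> j \<longrightarrow> w i \<noteq> w j"
    and w_sum: "\<forall>i<r. \<forall>j<r. w i + w j \<noteq> 0"
    and w_sum_cnj: "\<forall>i<r. \<forall>j<r. w i + cnj (w j) \<noteq> 0"
    and traj_0: "traj 0 = (map_mat complex_of_real X0, map_mat complex_of_real P0)"
    and traj_step: "\<forall>k. neumann_step n a lam r w (traj k) (traj (Suc k))"
  shows "\<forall>k. real_mat (fst (traj k)) \<and> real_mat (snd (traj k))"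
proof -
  have invariant: "fst (traj k) \<in> carrier_mat n r \<and> snd (traj k) \<in> carrier_mat n r \<and>
      map_mat cnj (fst (traj k)) = fst (traj k) \<and> map_mat cnj (snd (traj k)) = snd (traj k)" for k
  proof (induction k)
    case 0
    show ?case using X0_dim P0_dim by (auto simp: traj_0 mat_eq_iff)
  next
    case (Suc k)
    have "neumann_step n a lam r w (fst (traj k), snd (traj k)) (fst (traj (Suc k)), snd (traj (Suc k)))"
      using traj_step by simp
    with Suc show ?case
      using neumann_step_preserves_real w_sum w_sum_cnj by blast
  qed
  then show ?thesis by (simp add: real_mat_iff_cnj_fixed)
qed

end
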